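(* Let $r$ be real with $0<|r|<1$, and define for $x\in\mathbb{R}$: $f_r(x):=\sum_{n=1}^\infty r^n\varphi^{(n)}(x)$ and $f_{r,N}(x):=\sum_{n=1}^{N-1}r^n\varphi^{(n)}(x)$. Let $E[f_r]:=\int_0^1 f_r(x)\,dx$. Then for every $N=1,2,\dots$ and every $x\in[0,1]$, $$\frac{f_r(x)-f_{r,N}(x)}{\frac12\sum_{n=N}^\infty r^n}=\frac{2(1-r)}{r}\cdot f_r(2^{N-1}x)=\frac{f_r(2^{N-1}x)}{E[f_r]}.$$
   Context: The tent map on $[0,1]$ is $\varphi(x)=2x$ for $x\in[0,1/2]$ and $\varphi(x)=2(1-x)$ for $x\in[1/2,1]$; it is extended to $\mathbb{R}$ by $\varphi(x):=\varphi(x-[x])$ (period 1), and $\varphi^{(n)}$ denotes the $n$-fold iterate of $\varphi$, so that $\varphi^{(n)}(x)=\varphi(2^{n-1}x)$. *)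

theory Defs
  imports "HOL-Analysis.Analysis"
begin

definition tent :: "real \<Rightarrow> real" where
  "tent x = (if x \<le> 1/2 then 2 * x else 2 * (1 - x))"

definition phi :: "real \<Rightarrow> real" where
  "phi x = tent (x - of_int \<lfloor>x\<rfloor>)"

definition f :: "real \<Rightarrow> real \<Rightarrow> real" where
  "f r x = (\<Sum>n. r ^ Suc n * (phi ^^ Suc n) x)"

definition fN :: "real \<Rightarrow> nat \<Rightarrow> real \<Rightarrow> real" where
  "fN r N x = (\<Sum>n=1..N-1. r ^ n * (phi ^^ n) x)"

definition E :: "real \<Rightarrow> real" where
  "E r = integral {0..1} (f r)"

end

theory Submission
  imports Defs
begin

(* Since phi(2y) = phi(phi y), doubling the argument shifts the iterates by one step,
   so the tail sum_{n>=N} r^n phi^(n)(x) of f_r is r^(N-1) f_r(2^(N-1) x), and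
   (1/2) sum_{n>=N} r^n = r^N / (2(1-r)) gives the first equality.
   For the second, the tent map preserves Lebesgue measure on [0,1], so integrating the
   functional equation f_r = r phi + r (f_r o phi) gives E[f_r] = r/2 + r E[f_r],
   i.e. E[f_r] = r / (2(1-r)). Neither step needs the hypothesis x in [0,1]. *)

lemma tent_eq_abs: "tent x = 1 - \<bar>2 * x - 1\<bar>"
  by (simp add: tent_def)

lemma phi_eq_tent:
  assumes "x \<in> {0..1}"
  shows "phi x = tent x"
proof (cases "x = 1")
  case False
  with assms have "\<lfloor>x\<rfloor> = 0" by (simp add: floor_eq_iff)
  then show ?thesis by (simp add: phi_def)
qed (simp add: phi_def tent_def)

lemma phi_range: "phi y \<in> {0..1}"
proof -
  have "0 \<le> y - of_int \<lfloor>y\<rfloor>" "y - of_int \<lfloor>y\<rfloor> < 1" by linarith+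
  then show ?thesis unfolding phi_def tent_def by auto
qed

lemma phi_mult_2: "phi (2 * y) = phi (phi y)"
proof -
  define t where "t = y - of_int \<lfloor>y\<rfloor>"
  have t: "0 \<le> t" "t < 1" unfolding t_def by linarith+
  have two_y: "2 * y = 2 * t + of_int (2 * \<lfloor>y\<rfloor>)"
    unfolding t_def by simp
  then have "\<lfloor>2 * y\<rfloor> = \<lfloor>2 * t\<rfloor> + 2 * \<lfloor>y\<rfloor>"
    by (simp only: floor_add_int)
  with two_y have phi_2y: "phi (2 * y) = tent (2 * t - of_int \<lfloor>2 * t\<rfloor>)"
    unfolding phi_def by simp
  have phi_y: "phi y = tent t"
    unfolding phi_def t_def ..
  show ?thesis
  proof (cases "t < 1/2")
    case True
    then have "\<lfloor>2 * t\<rfloor> = 0" using t by (simp add: floor_eq_iff)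
    with True t show ?thesis
      unfolding phi_2y phi_y by (subst phi_eq_tent) (auto simp: tent_def)
  next
    case False
    then have "\<lfloor>2 * t\<rfloor> = 1" using t by (simp add: floor_eq_iff)
    with False t show ?thesis
      unfolding phi_2y phi_y by (subst phi_eq_tent) (auto simp: tent_def)
  qed
qed

lemma continuous_on_phi: "continuous_on {0..1} phi"
  by (rule continuous_on_eq[of _ tent])
     (auto simp: tent_eq_abs[abs_def] phi_eq_tent intro!: continuous_intros)

lemma funpow_phi_mult_2: "(phi ^^ Suc n) (2 * y) = (phi ^^ Suc n) (phi y)"
  by (simp only: funpow_Suc_right o_apply phi_mult_2)

lemma funpow_phi_mult_2_power: "(phi ^^ Suc n) (2 ^ m * y) = (phi ^^ Suc (n + m)) y"
proof (induction m arbitrary: n)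
  case 0
  show ?case by simp
next
  case (Suc m)
  have "(phi ^^ Suc n) (2 ^ Suc m * y) = (phi ^^ Suc n) (phi (2 ^ m * y))"
    using funpow_phi_mult_2[of n "2 ^ m * y"] by (simp add: mult.assoc)
  also have "\<dots> = (phi ^^ Suc (Suc n)) (2 ^ m * y)"
    by (simp only: funpow_Suc_right o_apply)
  also have "\<dots> = (phi ^^ Suc (n + Suc m)) y"
    using Suc.IH[of "Suc n"] by simp
  finally show ?case .
qed

lemma funpow_phi_range: "(phi ^^ Suc n) y \<in> {0..1}"
  using phi_range by simp

lemma continuous_on_funpow_phi: "continuous_on {0..1} (phi ^^ n)"
proof (induction n)
  case 0
  show ?case by (simp add: continuous_on_id)
next
  case (Suc n)
  have "continuous_on {0..1} ((phi ^^ n) \<circ> phi)"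
    by (intro continuous_on_compose continuous_on_phi continuous_on_subset[OF Suc.IH])
       (use phi_range in auto)
  then show ?case by (simp only: funpow_Suc_right)
qed

lemma norm_f_term_le: "norm (r ^ Suc n * (phi ^^ Suc n) y) \<le> \<bar>r\<bar> ^ Suc n"
proof -
  have "\<bar>(phi ^^ Suc n) y\<bar> \<le> 1" using funpow_phi_range[of n y] by auto
  then have "\<bar>r\<bar> ^ Suc n * \<bar>(phi ^^ Suc n) y\<bar> \<le> \<bar>r\<bar> ^ Suc n"
    by (simp add: mult_left_le)
  then show ?thesis by (simp add: abs_mult power_abs)
qed

lemma summable_f_series:
  "\<bar>r\<bar> < 1 \<Longrightarrow> summable (\<lambda>n. r ^ Suc n * (phi ^^ Suc n) y)"
  by (rule summable_comparison_test'[OF _ norm_f_term_le]) (simp add: summable_geometric)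

lemma continuous_on_f:
  assumes "\<bar>r\<bar> < 1"
  shows "continuous_on {0..1} (f r)"
proof -
  have "uniform_limit {0..1} (\<lambda>n x. \<Sum>i<n. r ^ Suc i * (phi ^^ Suc i) x) (f r) sequentially"
    unfolding f_def[abs_def]
    by (rule Weierstrass_m_test[OF norm_f_term_le]) (simp add: assms summable_geometric)
  moreover have "continuous_on {0..1} (\<lambda>x. \<Sum>i<n. r ^ Suc i * (phi ^^ Suc i) x)" for n
    by (intro continuous_on_sum continuous_on_mult continuous_on_const continuous_on_funpow_phi)
  ultimately show ?thesis
    by (intro uniform_limit_theorem[OF always_eventually]) auto
qed

lemma f_mult_2: "f r (2 * y) = f r (phi y)"
  unfolding f_def funpow_phi_mult_2 ..

lemma f_eq_fN_plus_tail:
  assumes "\<bar>r\<bar> < 1"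
  shows "f r y = fN r (Suc m) y + r ^ m * f r (2 ^ m * y)"
proof -
  have "f r y = (\<Sum>n. r ^ Suc (n + m) * (phi ^^ Suc (n + m)) y)
                + (\<Sum>i<m. r ^ Suc i * (phi ^^ Suc i) y)"
    unfolding f_def by (rule suminf_split_initial_segment[OF summable_f_series[OF assms]])
  also have "(\<Sum>i<m. r ^ Suc i * (phi ^^ Suc i) y) = fN r (Suc m) y"
    unfolding fN_def by (simp add: sum.atLeast1_atMost_eq lessThan_Suc_atMost)
  also have "(\<Sum>n. r ^ Suc (n + m) * (phi ^^ Suc (n + m)) y)
             = (\<Sum>n. r ^ m * (r ^ Suc n * (phi ^^ Suc n) (2 ^ m * y)))"
    by (simp only: funpow_phi_mult_2_power) (simp add: power_add mult_ac)
  also have "\<dots> = r ^ m * f r (2 ^ m * y)"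
    unfolding f_def by (rule suminf_mult[OF summable_f_series[OF assms]])
  finally show ?thesis by simp
qed

lemma f_phi_equation:
  assumes "\<bar>r\<bar> < 1"
  shows "f r y = r * phi y + r * f r (phi y)"
  using f_eq_fN_plus_tail[OF assms, of y 1] by (simp add: fN_def f_mult_2)

lemma has_integral_comp_tent:
  fixes g :: "real \<Rightarrow> real"
  assumes "g integrable_on {0..1}"
  shows "((\<lambda>x. g (tent x)) has_integral integral {0..1} g) {0..1}"
proof -
  define I where "I = integral {0..1} g"
  have g: "(g has_integral I) (cbox 0 1)"
    using assms unfolding I_def by (simp add: has_integral_integral)
  have "((\<lambda>x. g (2 * x)) has_integral I / 2) {0..1/2}"
    using has_integral_affinity'[OF g, of 2 0] by simp
  then have left: "((\<lambda>x. g (tent x)) has_integral I / 2) {0..1/2}"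
    by (rule has_integral_eq[rotated]) (simp add: tent_def)
  have tent_right: "tent x = 2 - 2 * x" if "x \<in> {1/2..1}" for x
    using that by (simp add: tent_def)
  have "(\<lambda>x. (-1/2) * x + 1) ` {0..1} = {1/2..(1::real)}"
    by (subst image_affinity_atLeastAtMost) simp
  then have "((\<lambda>x. g (2 - 2 * x)) has_integral I / 2) {1/2..1}"
    using has_integral_affinity[OF g, of "-2" 2] by (simp add: algebra_simps)
  then have right: "((\<lambda>x. g (tent x)) has_integral I / 2) {1/2..1}"
    by (rule has_integral_eq[rotated]) (simp add: tent_right)
  have "((\<lambda>x. g (tent x)) has_integral I / 2 + I / 2) {0..1}"
    by (rule has_integral_combine[OF _ _ left right]) auto
  then show ?thesis unfolding I_def by simp
qed

lemma E_eq:
  assumes "\<bar>r\<bar> < 1"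
  shows "E r = r / (2 * (1 - r))"
proof -
  have "((\<lambda>x. f r (tent x)) has_integral E r) {0..1}"
    unfolding E_def
    by (rule has_integral_comp_tent[OF integrable_continuous_real[OF continuous_on_f[OF assms]]])
  moreover have "(tent has_integral 1/2) {0..1}"
    using has_integral_comp_tent[OF integrable_continuous_real[OF continuous_on_id]] by simp
  ultimately have "((\<lambda>x. r * tent x + r * f r (tent x)) has_integral r * (1/2) + r * E r) {0..1}"
    by (intro has_integral_add has_integral_mult_right)
  moreover have "r * tent x + r * f r (tent x) = f r x" if "x \<in> {0..1}" for x
    using f_phi_equation[OF assms, of x] unfolding phi_eq_tent[OF that] by simp
  ultimately have "(f r has_integral r * (1/2) + r * E r) {0..1}"
    by (rule has_integral_eq[rotated])
  then have "E r = r * (1/2) + r * E r"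
    unfolding E_def by (rule integral_unique)
  moreover have "1 - r \<noteq> 0" using assms by auto
  ultimately show ?thesis by (simp add: field_simps)
qed

lemma suminf_geometric_shift:
  fixes c :: "'a :: {real_normed_field, banach}"
  assumes "norm c < 1"
  shows "(\<Sum>k. c ^ (k + N)) = c ^ N / (1 - c)"
proof -
  have "(\<Sum>k. c ^ k * c ^ N) = (\<Sum>k. c ^ k) * c ^ N"
    by (rule suminf_mult2[symmetric]) (simp add: assms summable_geometric)
  then show ?thesis by (simp add: power_add suminf_geometric[OF assms])
qed

theorem lemma3p1:
  fixes r x :: real and N :: nat
  assumes "0 < \<bar>r\<bar>" "\<bar>r\<bar> < 1" "N \<ge> 1" "x \<in> {0..1}"
  shows "(f r x - fN r N x) / ((1/2) * (\<Sum>k. r ^ (k + N)))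
           = 2 * (1 - r) / r * f r (2 ^ (N - 1) * x)
       \<and> 2 * (1 - r) / r * f r (2 ^ (N - 1) * x) = f r (2 ^ (N - 1) * x) / E r"
proof -
  obtain m where N: "N = Suc m" using assms(3) by (cases N) auto
  define F where "F = f r (2 ^ (N - 1) * x)"
  have "r ^ m \<noteq> 0" using assms(1) by simp
  have tail: "f r x - fN r N x = r ^ m * F"
    using f_eq_fN_plus_tail[OF assms(2), of x m] unfolding N F_def by simp
  have geometric_tail: "(1/2) * (\<Sum>k. r ^ (k + N)) = r ^ m * E r"
    using suminf_geometric_shift[of r N] assms(2) unfolding E_eq[OF assms(2)] N by simp
  have "(f r x - fN r N x) / ((1/2) * (\<Sum>k. r ^ (k + N))) = F / E r"
    unfolding tail geometric_tail using \<open>r ^ m \<noteq> 0\<close> by (rule mult_divide_mult_cancel_left)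
  moreover have "2 * (1 - r) / r * F = F / E r"
    unfolding E_eq[OF assms(2)] by simp
  ultimately show ?thesis
    unfolding F_def[symmetric] by argo
qed

end
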